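(* For all $k,\ell\in\mathbb N_0$, in $\mathrm{sVW}$ one has $b\circ(y^k\otimes y^\ell)\circ b^*=0$ in $\mathrm{Hom}(0,0)$; equivalently $b_iy_i^ky_{i+1}^\ell b_i^*=0$ for all $i\ge1$.
   Context: Work over $\mathbb C$. A supercategory is a category enriched in $\mathbb Z/2$-graded vector spaces with parity-preserving composition; in a monoidal supercategory the super interchange law $(f\otimes g)\circ(h\otimes k)=(-1)^{\bar g\bar h}(f\circ h)\otimes(g\circ k)$ holds for homogeneous morphisms. The affine VW supercategory $\mathrm{sVW}$ is the $\mathbb C$-linear strict monoidal supercategory generated by one object $\star$ and morphisms $s:\star\otimes\star\to\star\otimes\star$ (even), $b:\star\otimes\star\to\mathbb 1$ (odd), $b^*:\mathbb 1\to\star\otimes\star$ (odd), $y:\star\to\star$ (even), subject to: (R1) $s\circ s=1_{\star\otimes\star}$ and $(s\otimes 1)(1\otimes s)(s\otimes 1)=(1\otimes s)(s\otimes1)(1\otimes s)$; (R2) $(b\otimes 1_\star)\circ(1_\star\otimes b^* )=-1_\star$ and $(1_\star\otimes b)\circ(b^*\otimes 1_\star)=1_\star$; (R3) $(1_\star\otimes s)\circ(b^*\otimes 1_\star)=(s\otimes 1_\star)\circ(1_\star\otimes b^* )$ and $s\circ b^*=-b^*$; (R4) $1_\star\otimes y=s\circ(y\otimes 1_\star)\circ s+s+b^*\circ b$ and $b\circ(1_\star\otimes y)=b\circ(y\otimes 1_\star)+b$. Objects are identified with $a\in\mathbb N_0$; $b_i=1_{i-1}\otimes b\otimes 1_{a-i+1}$,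 $b_i^*=1_{i-1}\otimes b^*\otimes 1_{a-i+1}$, $y_i=1_{i-1}\otimes y\otimes 1_{a-i}$. *)

theory Defs
  imports Complex_Main
begin

text \<open>Syntactic presentation of the affine VW supercategory sVW.  Every well-typed
  expression is homogeneous; typed t a b p means t : a -> b of parity p
  (True = odd).  Comp f g is f composed after g.\<close>

datatype tm =
    Id nat | S | B | Bs | Y
  | Zero nat nat bool
  | Comp tm tm
  | Tens tm tm
  | Add tm tm
  | Smul complex tm

inductive typed :: "tm \<Rightarrow> nat \<Rightarrow> nat \<Rightarrow> bool \<Rightarrow> bool" where
  t_id: "typed (Id n) n n False"
| t_s: "typed S 2 2 False"
| t_b: "typed B 2 0 True"
| t_bs: "typed Bs 0 2 True"
| t_y: "typed Y 1 1 False"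
| t_zero: "typed (Zero a b p) a b p"
| t_comp: "typed g a b p \<Longrightarrow> typed f b c q \<Longrightarrow> typed (Comp f g) a c (p \<noteq> q)"
| t_tens: "typed f a b p \<Longrightarrow> typed g c d q \<Longrightarrow> typed (Tens f g) (a + c) (b + d) (p \<noteq> q)"
| t_add: "typed f a b p \<Longrightarrow> typed g a b p \<Longrightarrow> typed (Add f g) a b p"
| t_smul: "typed f a b p \<Longrightarrow> typed (Smul c f) a b p"

text \<open>Two expressions denote the same morphism of sVW iff they are related.\<close>

inductive sVW_eq :: "tm \<Rightarrow> tm \<Rightarrow> bool" where
  refl: "typed f a b p \<Longrightarrow> sVW_eq f f"
| sym: "sVW_eq f g \<Longrightarrow> sVW_eq g f"
| trans: "sVW_eq f g \<Longrightarrow> sVW_eq g h \<Longrightarrow> sVW_eq f h"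
| comp_cong: "sVW_eq f f' \<Longrightarrow> sVW_eq g g' \<Longrightarrow> typed g a b p \<Longrightarrow> typed f b c q
      \<Longrightarrow> sVW_eq (Comp f g) (Comp f' g')"
| tens_cong: "sVW_eq f f' \<Longrightarrow> sVW_eq g g' \<Longrightarrow> sVW_eq (Tens f g) (Tens f' g')"
| add_cong: "sVW_eq f f' \<Longrightarrow> sVW_eq g g' \<Longrightarrow> typed f a b p \<Longrightarrow> typed g a b p
      \<Longrightarrow> sVW_eq (Add f g) (Add f' g')"
| smul_cong: "sVW_eq f f' \<Longrightarrow> sVW_eq (Smul c f) (Smul c f')"
| add_assoc: "typed f a b p \<Longrightarrow> typed g a b p \<Longrightarrow> typed h a b p
      \<Longrightarrow> sVW_eq (Add (Add f g) h) (Add f (Add g h))"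
| add_comm: "typed f a b p \<Longrightarrow> typed g a b p \<Longrightarrow> sVW_eq (Add f g) (Add g f)"
| add_zero: "typed f a b p \<Longrightarrow> sVW_eq (Add f (Zero a b p)) f"
| add_inv: "typed f a b p \<Longrightarrow> sVW_eq (Add f (Smul (-1) f)) (Zero a b p)"
| smul_one: "typed f a b p \<Longrightarrow> sVW_eq (Smul 1 f) f"
| smul_smul: "typed f a b p \<Longrightarrow> sVW_eq (Smul c (Smul d f)) (Smul (c * d) f)"
| smul_add_left: "typed f a b p \<Longrightarrow> sVW_eq (Smul (c + d) f) (Add (Smul c f) (Smul d f))"
| smul_add_right: "typed f a b p \<Longrightarrow> typed g a b p
      \<Longrightarrow> sVW_eq (Smul c (Add f g)) (Add (Smul c f) (Smul c g))"
| comp_add_left: "typed g a b p \<Longrightarrow> typed f b c q \<Longrightarrow> typed f' b c q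
      \<Longrightarrow> sVW_eq (Comp (Add f f') g) (Add (Comp f g) (Comp f' g))"
| comp_add_right: "typed g a b p \<Longrightarrow> typed g' a b p \<Longrightarrow> typed f b c q
      \<Longrightarrow> sVW_eq (Comp f (Add g g')) (Add (Comp f g) (Comp f g'))"
| comp_smul_left: "typed g a b p \<Longrightarrow> typed f b c q
      \<Longrightarrow> sVW_eq (Comp (Smul x f) g) (Smul x (Comp f g))"
| comp_smul_right: "typed g a b p \<Longrightarrow> typed f b c q
      \<Longrightarrow> sVW_eq (Comp f (Smul x g)) (Smul x (Comp f g))"
| tens_add_left: "typed f a b p \<Longrightarrow> typed f' a b p \<Longrightarrow> typed g c d q
      \<Longrightarrow> sVW_eq (Tens (Add f f') g) (Add (Tens f g) (Tens f' g))"
| tens_add_right: "typed f a b p \<Longrightarrow> typed g c d q \<Longrightarrow> typed g' c d q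
      \<Longrightarrow> sVW_eq (Tens f (Add g g')) (Add (Tens f g) (Tens f g'))"
| tens_smul_left: "typed f a b p \<Longrightarrow> typed g c d q
      \<Longrightarrow> sVW_eq (Tens (Smul x f) g) (Smul x (Tens f g))"
| tens_smul_right: "typed f a b p \<Longrightarrow> typed g c d q
      \<Longrightarrow> sVW_eq (Tens f (Smul x g)) (Smul x (Tens f g))"
| comp_id_left: "typed f a b p \<Longrightarrow> sVW_eq (Comp (Id b) f) f"
| comp_id_right: "typed f a b p \<Longrightarrow> sVW_eq (Comp f (Id a)) f"
| comp_assoc: "typed h a b p \<Longrightarrow> typed g b c q \<Longrightarrow> typed f c d r
      \<Longrightarrow> sVW_eq (Comp (Comp f g) h) (Comp f (Comp g h))"
| tens_id: "sVW_eq (Tens (Id m) (Id n)) (Id (m + n))"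
| tens_assoc: "typed f a b p \<Longrightarrow> typed g c d q \<Longrightarrow> typed h e e' r
      \<Longrightarrow> sVW_eq (Tens (Tens f g) h) (Tens f (Tens g h))"
| tens_unit_left: "typed f a b p \<Longrightarrow> sVW_eq (Tens (Id 0) f) f"
| tens_unit_right: "typed f a b p \<Longrightarrow> sVW_eq (Tens f (Id 0)) f"
| interchange: "typed h a b p3 \<Longrightarrow> typed f b c p1 \<Longrightarrow> typed k x e p4 \<Longrightarrow> typed g e d p2
      \<Longrightarrow> sVW_eq (Comp (Tens f g) (Tens h k))
                 (Smul (if p2 \<and> p3 then -1 else 1) (Tens (Comp f h) (Comp g k)))"
| R1a: "sVW_eq (Comp S S) (Id 2)"
| R1b: "sVW_eq (Comp (Tens S (Id 1)) (Comp (Tens (Id 1) S) (Tens S (Id 1))))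
               (Comp (Tens (Id 1) S) (Comp (Tens S (Id 1)) (Tens (Id 1) S)))"
| R2a: "sVW_eq (Comp (Tens B (Id 1)) (Tens (Id 1) Bs)) (Smul (-1) (Id 1))"
| R2b: "sVW_eq (Comp (Tens (Id 1) B) (Tens Bs (Id 1))) (Id 1)"
| R3a: "sVW_eq (Comp (Tens (Id 1) S) (Tens Bs (Id 1))) (Comp (Tens S (Id 1)) (Tens (Id 1) Bs))"
| R3b: "sVW_eq (Comp S Bs) (Smul (-1) Bs)"
| R4a: "sVW_eq (Tens (Id 1) Y) (Add (Add (Comp S (Comp (Tens Y (Id 1)) S)) S) (Comp Bs B))"
| R4b: "sVW_eq (Comp B (Tens (Id 1) Y)) (Add (Comp B (Tens Y (Id 1))) B)"

fun ypow :: "nat \<Rightarrow> tm" where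
  "ypow 0 = Id 1"
| "ypow (Suc k) = Comp Y (ypow k)"

end

theory Submission
  imports Defs
begin

text \<open>Write \<open>D(k,l) = b \<circ> (y\<^sup>k \<otimes> y\<^sup>l) \<circ> b\<^sup>*\<close>. Capping the dot relation
  \<open>b (1 \<otimes> y) = b (y \<otimes> 1) + b\<close> gives \<open>D(k,l+1) = D(k+1,l) + D(k,l)\<close>. Straightening a cup
  with the zigzag relations (R2) turns the same relation into its mirror image
  \<open>(1 \<otimes> y) b\<^sup>* = (y \<otimes> 1) b\<^sup>* - b\<^sup>*\<close>, whence \<open>D(k,1) = D(k+1,0) - D(k,0)\<close>. Comparing the two
  expressions for \<open>D(k,1)\<close> yields \<open>2 D(k,0) = 0\<close>, so \<open>D(k,0) = 0\<close> over \<open>\<complex>\<close>, and the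
  recursion in \<open>l\<close> then makes every \<open>D(k,l)\<close> vanish.\<close>

text \<open>Every expression has at most one typing, computed by \<open>tm_type\<close>; this turns the typing side
  conditions of the defining rules of \<open>sVW_eq\<close> into goals that \<open>simp\<close> decides.\<close>

fun tm_type :: "tm \<Rightarrow> (nat \<times> nat \<times> bool) option" where
  "tm_type (Id n) = Some (n,n,False)"
| "tm_type S = Some (2,2,False)"
| "tm_type B = Some (2,0,True)"
| "tm_type Bs = Some (0,2,True)"
| "tm_type Y = Some (1,1,False)"
| "tm_type (Zero a b p) = Some (a,b,p)"
| "tm_type (Comp f g) = (case (tm_type f, tm_type g) of (Some (b',c,q), Some (a,b,p)) \<Rightarrow>
      if b = b' then Some (a,c,p \<noteq> q) else None | _ \<Rightarrow> None)"
| "tm_type (Tens f g) = (case (tm_type f, tm_type g) of (Some (a,b,p), Some (c,d,q)) \<Rightarrow>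
      Some (a+c,b+d,p\<noteq>q) | _ \<Rightarrow> None)"
| "tm_type (Add f g) = (case (tm_type f, tm_type g) of (Some t, Some t') \<Rightarrow>
      if t = t' then Some t else None | _ \<Rightarrow> None)"
| "tm_type (Smul c f) = tm_type f"

lemma typed_tm_type: "typed f a b p \<Longrightarrow> tm_type f = Some (a,b,p)"
  by (induction rule: typed.induct) auto

lemma tm_type_typed: "tm_type f = Some (a,b,p) \<Longrightarrow> typed f a b p"
  by (induction f arbitrary: a b p)
    (auto split: option.splits prod.splits if_splits
        intro: typed.intros simp: t_y[unfolded One_nat_def],
      (metis typed.t_comp typed.t_tens)+)

lemma typed_iff_tm_type: "typed f a b p \<longleftrightarrow> tm_type f = Some (a,b,p)"
  using typed_tm_type tm_type_typed by blast

abbreviation well_typed :: "tm \<Rightarrow> bool" where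
  "well_typed t \<equiv> tm_type t \<noteq> None"

definition parity :: "tm \<Rightarrow> bool" where
  "parity t = (case tm_type t of Some (a,b,p) \<Rightarrow> p | None \<Rightarrow> False)"

notation sVW_eq (infix "\<approx>" 50)
lemmas [trans] = sVW_eq.trans

lemma sVW_refl: "well_typed f \<Longrightarrow> f \<approx> f"
  by (cases "tm_type f") (auto simp: typed_iff_tm_type intro: sVW_eq.refl)

lemma sVW_comp_cong:
  "f \<approx> f' \<Longrightarrow> g \<approx> g' \<Longrightarrow> well_typed (Comp f g) \<Longrightarrow> Comp f g \<approx> Comp f' g'"
  by (cases "tm_type f"; cases "tm_type g";
      auto simp: typed_iff_tm_type split: if_splits intro: sVW_eq.comp_cong)

lemma sVW_comp_cong_left: "f \<approx> f' \<Longrightarrow> well_typed (Comp f g) \<Longrightarrow> Comp f g \<approx> Comp f' g"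
  by (cases "tm_type g"; auto split: option.splits if_splits intro!: sVW_comp_cong sVW_refl)

lemma sVW_comp_cong_right: "g \<approx> g' \<Longrightarrow> well_typed (Comp f g) \<Longrightarrow> Comp f g \<approx> Comp f g'"
  by (cases "tm_type f"; auto split: option.splits if_splits intro!: sVW_comp_cong sVW_refl)

lemma sVW_tens_cong_left: "f \<approx> f' \<Longrightarrow> well_typed g \<Longrightarrow> Tens f g \<approx> Tens f' g"
  by (auto intro!: sVW_eq.tens_cong sVW_refl)

lemma sVW_tens_cong_right: "g \<approx> g' \<Longrightarrow> well_typed f \<Longrightarrow> Tens f g \<approx> Tens f g'"
  by (auto intro!: sVW_eq.tens_cong sVW_refl)

lemma sVW_add_cong:
  "f \<approx> f' \<Longrightarrow> g \<approx> g' \<Longrightarrow> well_typed (Add f g) \<Longrightarrow> Add f g \<approx> Add f' g'"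
  by (cases "tm_type f"; cases "tm_type g";
      auto simp: typed_iff_tm_type split: if_splits intro: sVW_eq.add_cong)

lemma sVW_add_cong_left: "f \<approx> f' \<Longrightarrow> well_typed (Add f g) \<Longrightarrow> Add f g \<approx> Add f' g"
  by (cases "tm_type g"; auto split: option.splits if_splits intro!: sVW_add_cong sVW_refl)

lemma sVW_add_cong_right: "g \<approx> g' \<Longrightarrow> well_typed (Add f g) \<Longrightarrow> Add f g \<approx> Add f g'"
  by (cases "tm_type f"; auto split: option.splits if_splits intro!: sVW_add_cong sVW_refl)

lemma sVW_comp_assoc: "well_typed (Comp (Comp f g) h) \<Longrightarrow> Comp (Comp f g) h \<approx> Comp f (Comp g h)"
  by (cases "tm_type f"; cases "tm_type g"; cases "tm_type h";
      auto simp: typed_iff_tm_type split: if_splits intro: sVW_eq.comp_assoc)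

lemma sVW_comp_id_left: "well_typed (Comp (Id n) f) \<Longrightarrow> Comp (Id n) f \<approx> f"
  by (cases "tm_type f"; auto simp: typed_iff_tm_type split: if_splits intro: sVW_eq.comp_id_left)

lemma sVW_comp_id_right: "well_typed (Comp f (Id n)) \<Longrightarrow> Comp f (Id n) \<approx> f"
  by (cases "tm_type f"; auto simp: typed_iff_tm_type split: if_splits intro: sVW_eq.comp_id_right)

lemma sVW_tens_assoc: "well_typed (Tens (Tens f g) h) \<Longrightarrow> Tens (Tens f g) h \<approx> Tens f (Tens g h)"
  by (cases "tm_type f"; cases "tm_type g"; cases "tm_type h";
      auto simp: typed_iff_tm_type intro: sVW_eq.tens_assoc)

lemma sVW_tens_unit_left: "well_typed f \<Longrightarrow> Tens (Id 0) f \<approx> f"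
  by (cases "tm_type f"; auto simp: typed_iff_tm_type intro: sVW_eq.tens_unit_left)

lemma sVW_tens_unit_right: "well_typed f \<Longrightarrow> Tens f (Id 0) \<approx> f"
  by (cases "tm_type f"; auto simp: typed_iff_tm_type intro: sVW_eq.tens_unit_right)

lemma tm_type_Comp_typed:
  "well_typed (Comp f h) \<Longrightarrow> \<exists>a b c p q. typed h a b p \<and> typed f b c q"
  by (cases "tm_type f"; cases "tm_type h"; auto simp: typed_iff_tm_type split: if_splits)

lemma sVW_interchange:
  assumes "well_typed (Comp f h)" and "well_typed (Comp g k)"
  shows "Comp (Tens f g) (Tens h k)
    \<approx> Smul (if parity g \<and> parity h then -1 else 1) (Tens (Comp f h) (Comp g k))"
proof -
  obtain a b c p3 p1 where h: "typed h a b p3" and f: "typed f b c p1"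
    using tm_type_Comp_typed[OF assms(1)] by blast
  obtain x e d p4 p2 where k: "typed k x e p4" and g: "typed g e d p2"
    using tm_type_Comp_typed[OF assms(2)] by blast
  have "parity g = p2" "parity h = p3" using g h by (auto simp: parity_def typed_iff_tm_type)
  then show ?thesis using sVW_eq.interchange[OF h f k g] by simp
qed

lemma sVW_smul_one: "well_typed f \<Longrightarrow> Smul 1 f \<approx> f"
  by (cases "tm_type f"; auto simp: typed_iff_tm_type intro: sVW_eq.smul_one)

lemma sVW_interchange_even:
  "well_typed (Comp f h) \<Longrightarrow> well_typed (Comp g k) \<Longrightarrow> \<not> (parity g \<and> parity h) \<Longrightarrow>
    Comp (Tens f g) (Tens h k) \<approx> Tens (Comp f h) (Comp g k)"
  using sVW_interchange[of f h g k] sVW_smul_one[of "Tens (Comp f h) (Comp g k)"]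
  by (auto elim: sVW_eq.trans)

lemma sVW_interchange_odd:
  "well_typed (Comp f h) \<Longrightarrow> well_typed (Comp g k) \<Longrightarrow> parity g \<Longrightarrow> parity h \<Longrightarrow>
    Comp (Tens f g) (Tens h k) \<approx> Smul (-1) (Tens (Comp f h) (Comp g k))"
  using sVW_interchange[of f h g k] by auto

lemma sVW_smul_smul: "well_typed f \<Longrightarrow> Smul c (Smul d f) \<approx> Smul (c * d) f"
  by (cases "tm_type f"; auto simp: typed_iff_tm_type intro: sVW_eq.smul_smul)

lemma sVW_smul_add_left: "well_typed f \<Longrightarrow> Smul (c + d) f \<approx> Add (Smul c f) (Smul d f)"
  by (cases "tm_type f"; auto simp: typed_iff_tm_type intro: sVW_eq.smul_add_left)

lemma sVW_add_assoc: "well_typed (Add (Add f g) h) \<Longrightarrow> Add (Add f g) h \<approx> Add f (Add g h)"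
  by (cases "tm_type f"; cases "tm_type g"; cases "tm_type h";
      auto simp: typed_iff_tm_type split: if_splits intro: sVW_eq.add_assoc)

lemma sVW_add_comm: "well_typed (Add f g) \<Longrightarrow> Add f g \<approx> Add g f"
  by (cases "tm_type f"; cases "tm_type g";
      auto simp: typed_iff_tm_type split: if_splits intro: sVW_eq.add_comm)

lemma sVW_add_zero: "tm_type f = Some (a,b,p) \<Longrightarrow> Add f (Zero a b p) \<approx> f"
  by (auto simp: typed_iff_tm_type intro: sVW_eq.add_zero)

lemma sVW_add_inv: "tm_type f = Some (a,b,p) \<Longrightarrow> Add f (Smul (-1) f) \<approx> Zero a b p"
  by (auto simp: typed_iff_tm_type intro: sVW_eq.add_inv)

lemma sVW_comp_add_left:
  "well_typed (Comp (Add f f') g) \<Longrightarrow> Comp (Add f f') g \<approx> Add (Comp f g) (Comp f' g)"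
  by (cases "tm_type f"; cases "tm_type f'"; cases "tm_type g";
      auto simp: typed_iff_tm_type split: if_splits intro: sVW_eq.comp_add_left)

lemma sVW_comp_add_right:
  "well_typed (Comp f (Add g g')) \<Longrightarrow> Comp f (Add g g') \<approx> Add (Comp f g) (Comp f g')"
  by (cases "tm_type f"; cases "tm_type g'"; cases "tm_type g";
      auto simp: typed_iff_tm_type split: if_splits intro: sVW_eq.comp_add_right)

lemma sVW_comp_smul_left: "well_typed (Comp f g) \<Longrightarrow> Comp (Smul x f) g \<approx> Smul x (Comp f g)"
  by (cases "tm_type f"; cases "tm_type g";
      auto simp: typed_iff_tm_type split: if_splits intro: sVW_eq.comp_smul_left)

lemma sVW_comp_smul_right: "well_typed (Comp f g) \<Longrightarrow> Comp f (Smul x g) \<approx> Smul x (Comp f g)"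
  by (cases "tm_type f"; cases "tm_type g";
      auto simp: typed_iff_tm_type split: if_splits intro: sVW_eq.comp_smul_right)

lemma sVW_tens_add_left: "well_typed (Add f f') \<Longrightarrow> well_typed g \<Longrightarrow>
    Tens (Add f f') g \<approx> Add (Tens f g) (Tens f' g)"
  by (cases "tm_type f"; cases "tm_type f'"; cases "tm_type g";
      auto simp: typed_iff_tm_type split: if_splits intro: sVW_eq.tens_add_left)

lemma sVW_tens_add_right: "well_typed (Add g g') \<Longrightarrow> well_typed f \<Longrightarrow>
    Tens f (Add g g') \<approx> Add (Tens f g) (Tens f g')"
  by (cases "tm_type f"; cases "tm_type g'"; cases "tm_type g";
      auto simp: typed_iff_tm_type split: if_splits intro: sVW_eq.tens_add_right)

lemma sVW_tens_smul_left:
  "well_typed f \<Longrightarrow> well_typed g \<Longrightarrow> Tens (Smul x f) g \<approx> Smul x (Tens f g)"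
  by (cases "tm_type f"; cases "tm_type g";
      auto simp: typed_iff_tm_type intro: sVW_eq.tens_smul_left)

lemma sVW_tens_smul_right:
  "well_typed f \<Longrightarrow> well_typed g \<Longrightarrow> Tens f (Smul x g) \<approx> Smul x (Tens f g)"
  by (cases "tm_type f"; cases "tm_type g";
      auto simp: typed_iff_tm_type intro: sVW_eq.tens_smul_right)

lemma sVW_zero_add: "tm_type f = Some (a,b,p) \<Longrightarrow> Add (Zero a b p) f \<approx> f"
  by (rule sVW_eq.trans[OF sVW_add_comm sVW_add_zero]) auto

lemma sVW_add_left_cancel:
  assumes tX: "tm_type X = Some (a,b,p)" and tZ: "tm_type Z = Some (a,b,p)"
    and tW: "tm_type W = Some (a,b,p)" and h: "Add X Z \<approx> Add X W"
  shows "Z \<approx> W"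
proof -
  let ?N = "Smul (-1) X"
  have z: "Zero a b p \<approx> Add ?N X"
    by (rule sVW_eq.trans[OF sVW_eq.sym[OF sVW_add_inv[OF tX]] sVW_add_comm]) (simp add: tX)
  have "Z \<approx> Add (Zero a b p) Z" by (rule sVW_eq.sym[OF sVW_zero_add[OF tZ]])
  also have "\<dots> \<approx> Add (Add ?N X) Z" by (rule sVW_add_cong_left[OF z]) (simp add: tZ)
  also have "\<dots> \<approx> Add ?N (Add X Z)" by (rule sVW_add_assoc) (simp add: tX tZ)
  also have "\<dots> \<approx> Add ?N (Add X W)" by (rule sVW_add_cong_right[OF h]) (simp add: tX tZ)
  also have "\<dots> \<approx> Add (Add ?N X) W" by (rule sVW_eq.sym, rule sVW_add_assoc) (simp add: tX tW)
  also have "\<dots> \<approx> Add (Zero a b p) W"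
    by (rule sVW_add_cong_left[OF sVW_eq.sym[OF z]]) (simp add: tX tW)
  also have "\<dots> \<approx> W" by (rule sVW_zero_add[OF tW])
  finally show ?thesis .
qed

lemma sVW_smul_zero:
  assumes tZ: "tm_type Z = Some (a,b,p)"
  shows "Smul 0 Z \<approx> Zero a b p"
proof -
  let ?A = "Smul 0 Z"
  have "Add ?A ?A \<approx> Smul (0 + 0) Z" by (rule sVW_eq.sym, rule sVW_smul_add_left) (simp add: tZ)
  also have "\<dots> = ?A" by simp
  also have "?A \<approx> Add ?A (Zero a b p)" by (rule sVW_eq.sym, rule sVW_add_zero) (simp add: tZ)
  finally have "Add ?A ?A \<approx> Add ?A (Zero a b p)" .
  from sVW_add_left_cancel[OF _ _ _ this] show ?thesis by (simp add: tZ)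
qed

lemma sVW_zero_if_eq_neg:
  assumes tZ: "tm_type Z = Some (a,b,p)" and h: "Z \<approx> Smul (-1) Z"
  shows "Z \<approx> Zero a b p"
proof -
  let ?h = "1/2 :: complex"
  have "Z \<approx> Smul 1 Z" by (rule sVW_eq.sym, rule sVW_smul_one) (simp add: tZ)
  also have "Smul 1 Z = Smul (?h + ?h) Z" by simp
  also have "\<dots> \<approx> Add (Smul ?h Z) (Smul ?h Z)" by (rule sVW_smul_add_left) (simp add: tZ)
  also have "\<dots> \<approx> Add (Smul ?h Z) (Smul ?h (Smul (-1) Z))"
    by (rule sVW_add_cong_right[OF sVW_eq.smul_cong[OF h]]) (simp add: tZ)
  also have "\<dots> \<approx> Add (Smul ?h Z) (Smul (?h * (-1)) Z)"
    by (rule sVW_add_cong_right[OF sVW_smul_smul]) (simp_all add: tZ)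
  also have "\<dots> \<approx> Smul (?h + ?h * (-1)) Z"
    by (rule sVW_eq.sym, rule sVW_smul_add_left) (simp add: tZ)
  also have "\<dots> = Smul 0 Z" by simp
  also have "\<dots> \<approx> Zero a b p" by (rule sVW_smul_zero[OF tZ])
  finally show ?thesis .
qed

lemma sVW_diff_if_eq_add:
  assumes tA: "tm_type A = Some (a,b,p)" and tD: "tm_type D = Some (a,b,p)" and h: "X \<approx> Add A D"
  shows "A \<approx> Add X (Smul (-1) D)"
proof -
  have "A \<approx> Add A (Zero a b p)" by (rule sVW_eq.sym, rule sVW_add_zero[OF tA])
  also have "\<dots> \<approx> Add A (Add D (Smul (-1) D))"
    by (rule sVW_add_cong_right[OF sVW_eq.sym[OF sVW_add_inv[OF tD]]]) (simp add: tA)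
  also have "\<dots> \<approx> Add (Add A D) (Smul (-1) D)"
    by (rule sVW_eq.sym, rule sVW_add_assoc) (simp add: tA tD)
  also have "\<dots> \<approx> Add X (Smul (-1) D)"
    by (rule sVW_add_cong_left[OF sVW_eq.sym[OF h]]) (simp add: tA tD)
  finally show ?thesis .
qed

lemma sVW_neg_swap:
  assumes tT: "well_typed T" and h: "X \<approx> Smul (-1) T"
  shows "T \<approx> Smul (-1) X"
proof -
  have "T \<approx> Smul 1 T" by (rule sVW_eq.sym, rule sVW_smul_one[OF tT])
  also have "\<dots> = Smul ((-1) * (-1)) T" by simp
  also have "\<dots> \<approx> Smul (-1) (Smul (-1) T)" by (rule sVW_eq.sym, rule sVW_smul_smul[OF tT])
  also have "\<dots> \<approx> Smul (-1) X" by (rule sVW_eq.smul_cong, rule sVW_eq.sym[OF h])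
  finally show ?thesis .
qed

section \<open>Straightening cups\<close>

lemma tens_Id_1_1: "Tens (Id 1) (Id 1) \<approx> Id 2"
  by (metis one_add_one sVW_eq.tens_id)

lemma cup_commute_odd:
  assumes tu: "tm_type u = Some (0,2,True)"
  shows "Comp (Tens (Tens u (Id 1)) (Id 1)) Bs \<approx> Smul (-1) (Comp (Tens (Id 2) Bs) u)"
proof -
  have "Comp (Tens (Tens u (Id 1)) (Id 1)) Bs \<approx> Comp (Tens u (Tens (Id 1) (Id 1))) Bs"
    by (rule sVW_comp_cong_left, rule sVW_tens_assoc) (simp_all add: tu)
  also have "\<dots> \<approx> Comp (Tens u (Id 2)) Bs"
    by (rule sVW_comp_cong_left, rule sVW_tens_cong_right[OF tens_Id_1_1]) (simp_all add: tu)
  also have "\<dots> \<approx> Comp (Tens u (Id 2)) (Tens (Id 0) Bs)"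
    by (rule sVW_comp_cong_right, rule sVW_eq.sym, rule sVW_tens_unit_left) (simp_all add: tu)
  also have "\<dots> \<approx> Tens (Comp u (Id 0)) (Comp (Id 2) Bs)"
    by (rule sVW_interchange_even) (simp_all add: tu parity_def)
  also have "\<dots> \<approx> Tens u Bs"
    by (rule sVW_eq.tens_cong; rule sVW_comp_id_right sVW_comp_id_left) (simp_all add: tu)
  also have "Tens u Bs \<approx> Smul (-1) (Comp (Tens (Id 2) Bs) (Tens u (Id 0)))"
  proof (rule sVW_neg_swap)
    show "well_typed (Tens u Bs)" by (simp add: tu)
    have "Comp (Tens (Id 2) Bs) (Tens u (Id 0))
          \<approx> Smul (-1) (Tens (Comp (Id 2) u) (Comp Bs (Id 0)))"
      by (rule sVW_interchange_odd) (simp_all add: tu parity_def)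
    also have "\<dots> \<approx> Smul (-1) (Tens u Bs)"
      by (rule sVW_eq.smul_cong, rule sVW_eq.tens_cong; rule sVW_comp_id_right sVW_comp_id_left)
        (simp_all add: tu)
    finally show "Comp (Tens (Id 2) Bs) (Tens u (Id 0)) \<approx> Smul (-1) (Tens u Bs)" .
  qed
  also have "\<dots> \<approx> Smul (-1) (Comp (Tens (Id 2) Bs) u)"
    by (rule sVW_eq.smul_cong, rule sVW_comp_cong_right, rule sVW_tens_unit_right)
      (simp_all add: tu)
  finally show ?thesis .
qed

lemma Id_tens_zigzag: "Comp (Tens (Tens (Id 1) B) (Id 1)) (Tens (Id 2) Bs) \<approx> Smul (-1) (Id 2)"
proof -
  let ?I = "Id 1"
  have "Comp (Tens (Tens ?I B) ?I) (Tens (Id 2) Bs) \<approx> Comp (Tens ?I (Tens B ?I)) (Tens (Id 2) Bs)"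
    by (rule sVW_comp_cong_left, rule sVW_tens_assoc) simp_all
  also have "\<dots> \<approx> Comp (Tens ?I (Tens B ?I)) (Tens (Tens ?I ?I) Bs)"
    by (rule sVW_comp_cong_right, rule sVW_tens_cong_left, rule sVW_eq.sym[OF tens_Id_1_1]) simp_all
  also have "\<dots> \<approx> Comp (Tens ?I (Tens B ?I)) (Tens ?I (Tens ?I Bs))"
    by (rule sVW_comp_cong_right, rule sVW_tens_assoc) simp_all
  also have "\<dots> \<approx> Tens (Comp ?I ?I) (Comp (Tens B ?I) (Tens ?I Bs))"
    by (rule sVW_interchange_even) (simp_all add: parity_def)
  also have "\<dots> \<approx> Tens ?I (Smul (-1) ?I)"
    by (rule sVW_eq.tens_cong, rule sVW_comp_id_left, simp, rule sVW_eq.R2a)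
  also have "\<dots> \<approx> Smul (-1) (Tens ?I ?I)"
    by (rule sVW_tens_smul_right) simp_all
  also have "\<dots> \<approx> Smul (-1) (Id 2)"
    by (rule sVW_eq.smul_cong, rule tens_Id_1_1)
  finally show ?thesis .
qed

text \<open>The sign of the odd interchange in \<open>cup_commute_odd\<close> cancels the sign in (R2).\<close>

lemma cup_straighten:
  assumes tu: "tm_type u = Some (0,2,True)"
  shows "u \<approx> Comp (Tens (Comp (Tens (Id 1) B) (Tens u (Id 1))) (Id 1)) Bs"
proof -
  let ?I = "Id 1"
  let ?tau = "Comp (Tens ?I B) (Tens u ?I)"
  have "Tens ?tau ?I \<approx> Tens ?tau (Comp ?I ?I)"
    by (rule sVW_tens_cong_right, rule sVW_eq.sym, rule sVW_comp_id_left) (simp_all add: tu)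
  also have "\<dots> \<approx> Comp (Tens (Tens ?I B) ?I) (Tens (Tens u ?I) ?I)"
    by (rule sVW_eq.sym, rule sVW_interchange_even) (simp_all add: tu parity_def)
  finally have "Comp (Tens ?tau ?I) Bs \<approx> Comp (Comp (Tens (Tens ?I B) ?I) (Tens (Tens u ?I) ?I)) Bs"
    by (rule sVW_comp_cong_left) (simp add: tu)
  also have "\<dots> \<approx> Comp (Tens (Tens ?I B) ?I) (Comp (Tens (Tens u ?I) ?I) Bs)"
    by (rule sVW_comp_assoc) (simp add: tu)
  also have "\<dots> \<approx> Comp (Tens (Tens ?I B) ?I) (Smul (-1) (Comp (Tens (Id 2) Bs) u))"
    by (rule sVW_comp_cong_right[OF cup_commute_odd[OF tu]]) (simp add: tu)
  also have "\<dots> \<approx> Smul (-1) (Comp (Tens (Tens ?I B) ?I) (Comp (Tens (Id 2) Bs) u))"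
    by (rule sVW_comp_smul_right) (simp add: tu)
  also have "\<dots> \<approx> Smul (-1) (Comp (Comp (Tens (Tens ?I B) ?I) (Tens (Id 2) Bs)) u)"
    by (rule sVW_eq.smul_cong, rule sVW_eq.sym, rule sVW_comp_assoc) (simp add: tu)
  also have "\<dots> \<approx> Smul (-1) (Comp (Smul (-1) (Id 2)) u)"
    by (rule sVW_eq.smul_cong, rule sVW_comp_cong_left[OF Id_tens_zigzag]) (simp add: tu)
  also have "\<dots> \<approx> Smul (-1) (Smul (-1) (Comp (Id 2) u))"
    by (rule sVW_eq.smul_cong, rule sVW_comp_smul_left) (simp add: tu)
  also have "\<dots> \<approx> Smul ((-1)*(-1)) (Comp (Id 2) u)"
    by (rule sVW_smul_smul) (simp add: tu)
  also have "\<dots> = Smul 1 (Comp (Id 2) u)" by simp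
  also have "\<dots> \<approx> Comp (Id 2) u" by (rule sVW_smul_one) (simp add: tu)
  also have "\<dots> \<approx> u" by (rule sVW_comp_id_left) (simp add: tu)
  finally show ?thesis by (rule sVW_eq.sym)
qed

section \<open>Sliding a dot through a cup\<close>

lemma cap_dot_left: "Comp B (Tens Y (Id 1)) \<approx> Add (Comp B (Tens (Id 1) Y)) (Smul (-1) B)"
  by (rule sVW_diff_if_eq_add[OF _ _ sVW_eq.R4b]) simp_all

lemma Y_tens_cup_commute:
  "Comp (Tens (Id 1) (Tens (Id 1) Y)) (Tens Bs (Id 1)) \<approx> Comp (Tens Bs (Id 1)) Y"
proof -
  let ?I = "Id 1"
  have "Comp (Tens ?I (Tens ?I Y)) (Tens Bs ?I) \<approx> Comp (Tens (Tens ?I ?I) Y) (Tens Bs ?I)"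
    by (rule sVW_comp_cong_left, rule sVW_eq.sym, rule sVW_tens_assoc) simp_all
  also have "\<dots> \<approx> Comp (Tens (Id 2) Y) (Tens Bs ?I)"
    by (rule sVW_comp_cong_left, rule sVW_tens_cong_left[OF tens_Id_1_1]) simp_all
  also have "\<dots> \<approx> Tens (Comp (Id 2) Bs) (Comp Y ?I)"
    by (rule sVW_interchange_even) (simp_all add: parity_def)
  also have "\<dots> \<approx> Tens Bs Y"
    by (rule sVW_eq.tens_cong; rule sVW_comp_id_right sVW_comp_id_left) simp_all
  also have "\<dots> \<approx> Tens (Comp Bs (Id 0)) (Comp ?I Y)"
    by (rule sVW_eq.sym, rule sVW_eq.tens_cong; rule sVW_comp_id_right sVW_comp_id_left) simp_all
  also have "\<dots> \<approx> Comp (Tens Bs ?I) (Tens (Id 0) Y)"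
    by (rule sVW_eq.sym, rule sVW_interchange_even) (simp_all add: parity_def)
  also have "\<dots> \<approx> Comp (Tens Bs ?I) Y"
    by (rule sVW_comp_cong_right, rule sVW_tens_unit_left) simp_all
  finally show ?thesis .
qed

lemma zigzag_dotted: "Comp (Tens (Id 1) (Comp B (Tens (Id 1) Y))) (Tens Bs (Id 1)) \<approx> Y"
proof -
  let ?I = "Id 1"
  have "Tens ?I (Comp B (Tens ?I Y)) \<approx> Tens (Comp ?I ?I) (Comp B (Tens ?I Y))"
    by (rule sVW_tens_cong_left, rule sVW_eq.sym, rule sVW_comp_id_left) simp_all
  also have "\<dots> \<approx> Comp (Tens ?I B) (Tens ?I (Tens ?I Y))"
    by (rule sVW_eq.sym, rule sVW_interchange_even) (simp_all add: parity_def)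
  finally have "Comp (Tens ?I (Comp B (Tens ?I Y))) (Tens Bs ?I)
      \<approx> Comp (Comp (Tens ?I B) (Tens ?I (Tens ?I Y))) (Tens Bs ?I)"
    by (rule sVW_comp_cong_left) simp
  also have "\<dots> \<approx> Comp (Tens ?I B) (Comp (Tens ?I (Tens ?I Y)) (Tens Bs ?I))"
    by (rule sVW_comp_assoc) simp
  also have "\<dots> \<approx> Comp (Tens ?I B) (Comp (Tens Bs ?I) Y)"
    by (rule sVW_comp_cong_right[OF Y_tens_cup_commute]) simp
  also have "\<dots> \<approx> Comp (Comp (Tens ?I B) (Tens Bs ?I)) Y"
    by (rule sVW_eq.sym, rule sVW_comp_assoc) simp
  also have "\<dots> \<approx> Comp ?I Y"
    by (rule sVW_comp_cong_left, rule sVW_eq.R2b) simp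
  also have "\<dots> \<approx> Y" by (rule sVW_comp_id_left) simp
  finally show ?thesis .
qed

lemma bent_dotted_cup:
  "Comp (Tens (Id 1) B) (Tens (Comp (Tens (Id 1) Y) Bs) (Id 1)) \<approx> Add Y (Smul (-1) (Id 1))"
proof -
  let ?I = "Id 1"
  let ?X = "Comp B (Tens ?I Y)"
  have "Tens (Comp (Tens ?I Y) Bs) ?I \<approx> Tens (Comp (Tens ?I Y) Bs) (Comp ?I ?I)"
    by (rule sVW_tens_cong_right, rule sVW_eq.sym, rule sVW_comp_id_left) simp_all
  also have "\<dots> \<approx> Comp (Tens (Tens ?I Y) ?I) (Tens Bs ?I)"
    by (rule sVW_eq.sym, rule sVW_interchange_even) (simp_all add: parity_def)
  finally have "Comp (Tens ?I B) (Tens (Comp (Tens ?I Y) Bs) ?I)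
        \<approx> Comp (Tens ?I B) (Comp (Tens (Tens ?I Y) ?I) (Tens Bs ?I))"
    by (rule sVW_comp_cong_right) simp
  also have "\<dots> \<approx> Comp (Comp (Tens ?I B) (Tens ?I (Tens Y ?I))) (Tens Bs ?I)"
    by (rule sVW_eq.sym, rule sVW_eq.trans[OF sVW_comp_assoc], simp,
        rule sVW_comp_cong_right, rule sVW_comp_cong_left, rule sVW_eq.sym, rule sVW_tens_assoc)
      simp_all
  also have "\<dots> \<approx> Comp (Tens (Comp ?I ?I) (Comp B (Tens Y ?I))) (Tens Bs ?I)"
    by (rule sVW_comp_cong_left, rule sVW_interchange_even) (simp_all add: parity_def)
  also have "\<dots> \<approx> Comp (Tens ?I (Add ?X (Smul (-1) B))) (Tens Bs ?I)"
    by (rule sVW_comp_cong_left, rule sVW_eq.tens_cong[OF sVW_comp_id_left cap_dot_left]) simp_all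
  also have "\<dots> \<approx> Comp (Add (Tens ?I ?X) (Smul (-1) (Tens ?I B))) (Tens Bs ?I)"
    by (rule sVW_comp_cong_left, rule sVW_eq.trans[OF sVW_tens_add_right],
        simp_all, rule sVW_add_cong_right, rule sVW_tens_smul_right) simp_all
  also have "\<dots> \<approx> Add (Comp (Tens ?I ?X) (Tens Bs ?I)) (Comp (Smul (-1) (Tens ?I B)) (Tens Bs ?I))"
    by (rule sVW_comp_add_left) simp
  also have "\<dots> \<approx> Add Y (Smul (-1) (Comp (Tens ?I B) (Tens Bs ?I)))"
    by (rule sVW_add_cong[OF zigzag_dotted sVW_comp_smul_left]) simp_all
  also have "\<dots> \<approx> Add Y (Smul (-1) ?I)"
    by (rule sVW_add_cong_right, rule sVW_eq.smul_cong, rule sVW_eq.R2b) simp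
  finally show ?thesis .
qed

lemma dotted_cup_slide: "Comp (Tens (Id 1) Y) Bs \<approx> Add (Comp (Tens Y (Id 1)) Bs) (Smul (-1) Bs)"
proof -
  let ?I = "Id 1"
  have "Comp (Tens ?I Y) Bs \<approx> Comp (Tens (Comp (Tens ?I B) (Tens (Comp (Tens ?I Y) Bs) ?I)) ?I) Bs"
    by (rule cup_straighten) simp
  also have "\<dots> \<approx> Comp (Tens (Add Y (Smul (-1) ?I)) ?I) Bs"
    by (rule sVW_comp_cong_left, rule sVW_tens_cong_left[OF bent_dotted_cup]) simp_all
  also have "\<dots> \<approx> Comp (Add (Tens Y ?I) (Tens (Smul (-1) ?I) ?I)) Bs"
    by (rule sVW_comp_cong_left, rule sVW_tens_add_left) simp_all
  also have "\<dots> \<approx> Add (Comp (Tens Y ?I) Bs) (Comp (Tens (Smul (-1) ?I) ?I) Bs)"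
    by (rule sVW_comp_add_left) simp
  also have "\<dots> \<approx> Add (Comp (Tens Y ?I) Bs) (Comp (Smul (-1) (Tens ?I ?I)) Bs)"
    by (rule sVW_add_cong_right, rule sVW_comp_cong_left, rule sVW_tens_smul_left) simp_all
  also have "\<dots> \<approx> Add (Comp (Tens Y ?I) Bs) (Smul (-1) (Comp (Tens ?I ?I) Bs))"
    by (rule sVW_add_cong_right, rule sVW_comp_smul_left) simp_all
  also have "\<dots> \<approx> Add (Comp (Tens Y ?I) Bs) (Smul (-1) (Comp (Id 2) Bs))"
    by (rule sVW_add_cong_right, rule sVW_eq.smul_cong, rule sVW_comp_cong_left[OF tens_Id_1_1])
      simp_all
  also have "\<dots> \<approx> Add (Comp (Tens Y ?I) Bs) (Smul (-1) Bs)"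
    by (rule sVW_add_cong_right, rule sVW_eq.smul_cong, rule sVW_comp_id_left) simp_all
  finally show ?thesis .
qed

section \<open>Bubbles\<close>

lemma tm_type_ypow[simp]: "tm_type (ypow k) = Some (1,1,False)"
  by (induction k) auto

definition bubble :: "nat \<Rightarrow> nat \<Rightarrow> tm" where
  "bubble k l = Comp B (Comp (Tens (ypow k) (ypow l)) Bs)"

lemma tm_type_bubble [simp]: "tm_type (bubble k l) = Some (0,0,False)"
  by (simp add: bubble_def)

lemma bubble_Suc_right: "bubble k (Suc l) \<approx> Add (bubble (Suc k) l) (bubble k l)"
proof -
  let ?I = "Id 1"
  let ?T = "Tens (ypow k) (ypow l)"
  let ?P = "Comp ?T Bs"
  have dot_right: "Tens (ypow k) (ypow (Suc l)) \<approx> Comp (Tens ?I Y) ?T"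
  proof -
    have "Tens (ypow k) (Comp Y (ypow l)) \<approx> Tens (Comp ?I (ypow k)) (Comp Y (ypow l))"
      by (rule sVW_tens_cong_left, rule sVW_eq.sym, rule sVW_comp_id_left) simp_all
    also have "\<dots> \<approx> Comp (Tens ?I Y) ?T"
      by (rule sVW_eq.sym, rule sVW_interchange_even) (simp_all add: parity_def)
    finally show ?thesis by simp
  qed
  have dot_left: "Comp (Tens Y ?I) ?T \<approx> Tens (ypow (Suc k)) (ypow l)"
  proof -
    have "Comp (Tens Y ?I) ?T \<approx> Tens (Comp Y (ypow k)) (Comp ?I (ypow l))"
      by (rule sVW_interchange_even) (simp_all add: parity_def)
    also have "\<dots> \<approx> Tens (Comp Y (ypow k)) (ypow l)"
      by (rule sVW_tens_cong_right, rule sVW_comp_id_left) simp_all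
    finally show ?thesis by simp
  qed
  have "bubble k (Suc l) \<approx> Comp B (Comp (Comp (Tens ?I Y) ?T) Bs)"
    unfolding bubble_def
    by (rule sVW_comp_cong_right, rule sVW_comp_cong_left[OF dot_right]) simp_all
  also have "\<dots> \<approx> Comp (Comp B (Tens ?I Y)) ?P"
    by (rule sVW_eq.trans[OF sVW_comp_cong_right[OF sVW_comp_assoc]], simp_all,
        rule sVW_eq.sym, rule sVW_comp_assoc) simp
  also have "\<dots> \<approx> Comp (Add (Comp B (Tens Y ?I)) B) ?P"
    by (rule sVW_comp_cong_left, rule sVW_eq.R4b) simp
  also have "\<dots> \<approx> Add (Comp (Comp B (Tens Y ?I)) ?P) (Comp B ?P)"
    by (rule sVW_comp_add_left) simp
  also have "\<dots> \<approx> Add (Comp B (Comp (Comp (Tens Y ?I) ?T) Bs)) (Comp B ?P)"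
    by (rule sVW_add_cong_left, rule sVW_eq.trans[OF sVW_comp_assoc], simp,
        rule sVW_comp_cong_right, rule sVW_eq.sym, rule sVW_comp_assoc) simp_all
  also have "\<dots> \<approx> Add (bubble (Suc k) l) (bubble k l)"
    unfolding bubble_def
    by (rule sVW_add_cong_left, rule sVW_comp_cong_right, rule sVW_comp_cong_left[OF dot_left])
      simp_all
  finally show ?thesis .
qed

lemma ypow_Y_commute: "Comp (ypow m) Y \<approx> Comp Y (ypow m)"
proof (induction m)
  case 0
  have "Comp (Id 1) Y \<approx> Y" by (rule sVW_comp_id_left) simp
  also have "Y \<approx> Comp Y (Id 1)" by (rule sVW_eq.sym, rule sVW_comp_id_right) simp
  finally show ?case by simp
next
  case (Suc m)
  have "Comp (Comp Y (ypow m)) Y \<approx> Comp Y (Comp (ypow m) Y)" by (rule sVW_comp_assoc) simp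
  also have "\<dots> \<approx> Comp Y (Comp Y (ypow m))" by (rule sVW_comp_cong_right[OF Suc.IH]) simp
  finally show ?case by simp
qed

lemma ypow_tens_dotted_cup:
  "Comp (Tens (ypow k) (Id 1)) (Comp (Tens Y (Id 1)) Bs) \<approx> Comp (Tens (ypow (Suc k)) (Id 1)) Bs"
proof -
  let ?K = "Tens (ypow k) (Id 1)"
  have "Comp ?K (Comp (Tens Y (Id 1)) Bs) \<approx> Comp (Comp ?K (Tens Y (Id 1))) Bs"
    by (rule sVW_eq.sym, rule sVW_comp_assoc) simp
  also have "\<dots> \<approx> Comp (Tens (Comp (ypow k) Y) (Comp (Id 1) (Id 1))) Bs"
    by (rule sVW_comp_cong_left, rule sVW_interchange_even) (simp_all add: parity_def)
  also have "\<dots> \<approx> Comp (Tens (Comp Y (ypow k)) (Id 1)) Bs"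
    by (rule sVW_comp_cong_left, rule sVW_eq.tens_cong, rule ypow_Y_commute, rule sVW_comp_id_left)
      simp_all
  finally show ?thesis by simp
qed

lemma bubble_one_right: "bubble k 1 \<approx> Add (bubble (Suc k) 0) (Smul (-1) (bubble k 0))"
proof -
  let ?I = "Id 1"
  let ?K = "Tens (ypow k) ?I"
  have "Tens (ypow k) (Comp Y ?I) \<approx> Tens (Comp (ypow k) ?I) (Comp ?I Y)"
    by (rule sVW_eq.tens_cong, rule sVW_eq.sym, rule sVW_comp_id_right, simp,
        rule sVW_eq.trans[OF sVW_comp_id_right], simp, rule sVW_eq.sym, rule sVW_comp_id_left) simp
  also have "\<dots> \<approx> Comp ?K (Tens ?I Y)"
    by (rule sVW_eq.sym, rule sVW_interchange_even) (simp_all add: parity_def)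
  finally have dot_right: "Tens (ypow k) (ypow 1) \<approx> Comp ?K (Tens ?I Y)" by simp
  have "bubble k 1 \<approx> Comp B (Comp (Comp ?K (Tens ?I Y)) Bs)"
    unfolding bubble_def
    by (rule sVW_comp_cong_right, rule sVW_comp_cong_left[OF dot_right]) simp_all
  also have "\<dots> \<approx> Comp B (Comp ?K (Add (Comp (Tens Y ?I) Bs) (Smul (-1) Bs)))"
    by (rule sVW_comp_cong_right, rule sVW_eq.trans[OF sVW_comp_assoc], simp,
        rule sVW_comp_cong_right[OF dotted_cup_slide]) simp_all
  also have "\<dots> \<approx> Add (Comp B (Comp ?K (Comp (Tens Y ?I) Bs))) (Comp B (Comp ?K (Smul (-1) Bs)))"
    by (rule sVW_eq.trans[OF sVW_comp_cong_right[OF sVW_comp_add_right]], simp_all,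
        rule sVW_comp_add_right) simp
  also have "\<dots> \<approx> Add (Comp B (Comp (Tens (ypow (Suc k)) ?I) Bs)) (Smul (-1) (Comp B (Comp ?K Bs)))"
    by (rule sVW_add_cong[OF sVW_comp_cong_right[OF ypow_tens_dotted_cup]
          sVW_eq.trans[OF sVW_comp_cong_right[OF sVW_comp_smul_right] sVW_comp_smul_right]])
      simp_all
  finally show ?thesis by (simp add: bubble_def)
qed

lemma bubble_zero_right: "bubble k 0 \<approx> Zero 0 0 False"
proof -
  have "Add (bubble (Suc k) 0) (bubble k 0) \<approx> bubble k 1"
    using sVW_eq.sym[OF bubble_Suc_right[of k 0]] by simp
  also have "\<dots> \<approx> Add (bubble (Suc k) 0) (Smul (-1) (bubble k 0))"
    by (rule bubble_one_right)
  finally have "bubble k 0 \<approx> Smul (-1) (bubble k 0)"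
    by (rule sVW_add_left_cancel[where a=0 and b=0 and p=False, rotated 3]) simp_all
  then show ?thesis by (rule sVW_zero_if_eq_neg[rotated]) simp
qed

theorem mainTheorem5:
  fixes k l :: nat
  shows "sVW_eq (Comp B (Comp (Tens (ypow k) (ypow l)) Bs)) (Zero 0 0 False)"
proof (fold bubble_def, induction l arbitrary: k)
  case 0
  show ?case by (rule bubble_zero_right)
next
  case (Suc l)
  have "bubble k (Suc l) \<approx> Add (bubble (Suc k) l) (bubble k l)"
    by (rule bubble_Suc_right)
  also have "\<dots> \<approx> Add (Zero 0 0 False) (Zero 0 0 False)"
    by (rule sVW_add_cong[OF Suc.IH Suc.IH]) simp
  also have "\<dots> \<approx> Zero 0 0 False"
    by (rule sVW_add_zero) simp
  finally show ?case .
qed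

end
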